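(* Let $K\ge2$, $r\in[0,1]^K$ with $r(1)>r(2)>\cdots>r(K)$, and fix $j\in\{2,\ldots,K\}$. Write $\varepsilon:=1-\pi(j)$. There exists $\bar\varepsilon>0$ such that on the sector $\mathcal S_{\bar\varepsilon}:=\{\pi:\ 0<\varepsilon<\bar\varepsilon,\ \pi(1)\ge\varepsilon/K\}$, along the EG flow: (1) $\frac{d}{dt}\log\frac{\pi(1)}{\pi(j)}\ge\frac{\Delta_{1j}}{4K}\varepsilon$; (2) $\dot\varepsilon>0$.
   Context: Softmax policy $\pi_\theta(a)=e^{\theta(a)}/\sum_{a'}e^{\theta(a')}$ with $\theta\in\mathbb{R}^K$; advantage $U(a):=r(a)-\pi_\theta^\top r$; $\Delta_{ab}:=r(a)-r(b)$. The EG flow is $\dot\theta(a)=\sum_{a'=1}^K\mathbf{1}\{U(a')>0\}\pi(a')U(a')(\mathbf{1}\{a=a'\}-\pi(a))$. *)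

theory Defs
  imports Complex_Main
begin

text \<open>Actions are indexed by 1..K; parameters and rewards are functions nat => real.\<close>

definition softmax :: "nat \<Rightarrow> (nat \<Rightarrow> real) \<Rightarrow> nat \<Rightarrow> real" where
  "softmax K \<theta> a = exp (\<theta> a) / (\<Sum>a'=1..K. exp (\<theta> a'))"

definition adv :: "nat \<Rightarrow> (nat \<Rightarrow> real) \<Rightarrow> (nat \<Rightarrow> real) \<Rightarrow> nat \<Rightarrow> real" where
  "adv K r \<theta> a = r a - (\<Sum>a'=1..K. softmax K \<theta> a' * r a')"

definition eg_field :: "nat \<Rightarrow> (nat \<Rightarrow> real) \<Rightarrow> (nat \<Rightarrow> real) \<Rightarrow> nat \<Rightarrow> real" where
  "eg_field K r \<theta> a = (\<Sum>a'=1..K. (if adv K r \<theta> a' > 0 then 1 else 0) * softmax K \<theta> a' * adv K r \<theta> a'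
       * ((if a = a' then 1 else 0) - softmax K \<theta> a))"

end

theory Submission
  imports Defs
begin

(* Writing g(a) = pi(a) max(0, U(a)) and G = sum_a g(a), the EG field is theta'(a) = g(a) - pi(a) G,
   so d/dt log(pi(1)/pi(j)) = g(1) - g(j) + (pi(j) - pi(1)) G and
   d/dt eps = pi(j) (sum_a pi(a) theta'(a) - theta'(j)).
   Near the vertex j the best arm has advantage U(1) >= pi(j) Delta_1j, so pi(1) >= eps/K makes g(1)
   at least of order eps Delta_1j / K, whereas U(j) <= eps bounds g(j) by eps. With G >= g(1) + g(j),
   pi(1) <= eps and sum_a pi(a)^2 <= (1 - eps)^2 + eps^2, the g(1) term dominates both rates as soon
   as eps <= min(1/4, Delta_1j / (8K)). *)

lemma softmax_nonneg: "0 \<le> softmax K \<theta> a"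
  unfolding softmax_def by (simp add: sum_nonneg)

lemma softmax_pos: "1 \<le> K \<Longrightarrow> 0 < softmax K \<theta> a"
  unfolding softmax_def by (intro divide_pos_pos sum_pos) auto

lemma sum_softmax_eq_1: "1 \<le> K \<Longrightarrow> (\<Sum>a=1..K. softmax K \<theta> a) = 1"
  unfolding softmax_def
  by (subst sum_divide_distrib[symmetric]) (simp add: sum_pos less_imp_neq[symmetric])

lemma softmax_le_1: "a \<in> {1..K} \<Longrightarrow> softmax K \<theta> a \<le> 1"
  using member_le_sum[of a "{1..K}" "softmax K \<theta>"] sum_softmax_eq_1[of K \<theta>] by (simp add: softmax_nonneg)

lemma softmax_le_one_minus:
  assumes "a \<in> {1..K}" "b \<in> {1..K}" "a \<noteq> b"
  shows "softmax K \<theta> a \<le> 1 - softmax K \<theta> b"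
proof -
  have "(\<Sum>c\<in>{a, b}. softmax K \<theta> c) \<le> (\<Sum>c=1..K. softmax K \<theta> c)"
    using assms by (intro sum_mono2) (auto intro: softmax_nonneg)
  then show ?thesis
    using assms sum_softmax_eq_1[of K] by simp
qed

lemma sum_softmax_sq_le:
  assumes "b \<in> {1..K}"
  shows "(\<Sum>a=1..K. softmax K \<theta> a ^ 2) \<le> softmax K \<theta> b ^ 2 + (1 - softmax K \<theta> b) ^ 2"
proof -
  define p where "p = softmax K \<theta>"
  have K1: "1 \<le> K" using assms by simp
  have "(\<Sum>a\<in>{1..K}-{b}. p a ^ 2) \<le> (\<Sum>a\<in>{1..K}-{b}. p a * (1 - p b))"
    unfolding p_def power2_eq_square
    by (intro sum_mono mult_left_mono softmax_le_one_minus) (use assms in \<open>auto intro: softmax_nonneg\<close>)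
  also have "\<dots> = (1 - p b) ^ 2"
    using assms sum_softmax_eq_1[OF K1] by (simp add: sum_distrib_right[symmetric] sum_diff1 p_def power2_eq_square)
  finally show ?thesis
    using assms by (simp add: sum.remove p_def)
qed

lemma ln_softmax_ratio: "1 \<le> K \<Longrightarrow> ln (softmax K \<theta> a / softmax K \<theta> b) = \<theta> a - \<theta> b"
  unfolding softmax_def by (simp add: sum_pos less_imp_neq[symmetric] exp_diff[symmetric])

lemma softmax_has_real_derivative:
  assumes b: "b \<in> {1..K}"
    and \<theta>': "\<And>a. a \<in> {1..K} \<Longrightarrow> ((\<lambda>s. \<theta> s a) has_real_derivative v a) (at t)"
  shows "((\<lambda>s. softmax K (\<theta> s) b) has_real_derivative
           softmax K (\<theta> t) b * (v b - (\<Sum>a=1..K. softmax K (\<theta> t) a * v a))) (at t)"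
proof -
  define Z where "Z = (\<Sum>a=1..K. exp (\<theta> t a))"
  have Z_pos: "0 < Z" using b unfolding Z_def by (intro sum_pos) auto
  have "((\<lambda>s. exp (\<theta> s b) / (\<Sum>a=1..K. exp (\<theta> s a))) has_real_derivative
          (exp (\<theta> t b) * v b * Z - exp (\<theta> t b) * (\<Sum>a=1..K. exp (\<theta> t a) * v a)) / (Z * Z)) (at t)"
    using Z_pos unfolding Z_def
    by (intro DERIV_divide DERIV_sum DERIV_fun_exp \<theta>' b) auto
  moreover have "(exp (\<theta> t b) * v b * Z - exp (\<theta> t b) * (\<Sum>a=1..K. exp (\<theta> t a) * v a)) / (Z * Z)
      = softmax K (\<theta> t) b * (v b - (\<Sum>a=1..K. softmax K (\<theta> t) a * v a))"
  proof -
    have "exp (\<theta> t a) = Z * softmax K (\<theta> t) a" for a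
      using Z_pos by (simp add: softmax_def Z_def)
    then show ?thesis
      using Z_pos by (simp add: mult.assoc sum_distrib_left[symmetric] field_simps)
  qed
  ultimately show ?thesis
    by (simp add: softmax_def)
qed

lemma ln_softmax_ratio_has_real_derivative:
  assumes "a \<in> {1..K}" "b \<in> {1..K}"
    and \<theta>': "\<And>c. c \<in> {1..K} \<Longrightarrow> ((\<lambda>s. \<theta> s c) has_real_derivative v c) (at t)"
  shows "((\<lambda>s. ln (softmax K (\<theta> s) a / softmax K (\<theta> s) b)) has_real_derivative v a - v b) (at t)"
proof -
  have "(\<lambda>s. ln (softmax K (\<theta> s) a / softmax K (\<theta> s) b)) = (\<lambda>s. \<theta> s a - \<theta> s b)"
    using assms(1) by (simp add: ln_softmax_ratio)
  then show ?thesis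
    using assms by (simp add: DERIV_diff)
qed

lemma adv_eq_sum:
  assumes "1 \<le> K"
  shows "adv K r \<theta> a = (\<Sum>b=1..K. softmax K \<theta> b * (r a - r b))"
proof -
  have "(\<Sum>b=1..K. softmax K \<theta> b * (r a - r b)) = (\<Sum>b=1..K. softmax K \<theta> b) * r a - (\<Sum>b=1..K. softmax K \<theta> b * r b)"
    by (simp add: right_diff_distrib sum_subtractf sum_distrib_right)
  then show ?thesis
    using sum_softmax_eq_1[OF assms] by (simp add: adv_def)
qed

definition eg_gain :: "nat \<Rightarrow> (nat \<Rightarrow> real) \<Rightarrow> (nat \<Rightarrow> real) \<Rightarrow> nat \<Rightarrow> real" where
  "eg_gain K r \<theta> a = softmax K \<theta> a * max 0 (adv K r \<theta> a)"

lemma eg_gain_nonneg: "0 \<le> eg_gain K r \<theta> a"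
  by (simp add: eg_gain_def softmax_nonneg)

lemma eg_field_eq:
  assumes "a \<in> {1..K}"
  shows "eg_field K r \<theta> a = eg_gain K r \<theta> a - softmax K \<theta> a * (\<Sum>b=1..K. eg_gain K r \<theta> b)"
proof -
  have "eg_field K r \<theta> a = (\<Sum>b=1..K. (if a = b then eg_gain K r \<theta> b else 0) - softmax K \<theta> a * eg_gain K r \<theta> b)"
    unfolding eg_field_def eg_gain_def by (intro sum.cong) (auto simp: max_def algebra_simps)
  also have "\<dots> = eg_gain K r \<theta> a - softmax K \<theta> a * (\<Sum>b=1..K. eg_gain K r \<theta> b)"
    using assms by (simp add: sum_subtractf sum_distrib_left)
  finally show ?thesis .
qed

lemma sum_softmax_eg_field:
  "(\<Sum>a=1..K. softmax K \<theta> a * eg_field K r \<theta> a)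
     = (\<Sum>a=1..K. softmax K \<theta> a * eg_gain K r \<theta> a)
       - (\<Sum>a=1..K. eg_gain K r \<theta> a) * (\<Sum>a=1..K. softmax K \<theta> a ^ 2)"
proof -
  have "(\<Sum>a=1..K. softmax K \<theta> a * eg_field K r \<theta> a)
      = (\<Sum>a=1..K. softmax K \<theta> a * eg_gain K r \<theta> a
          - (\<Sum>b=1..K. eg_gain K r \<theta> b) * softmax K \<theta> a ^ 2)"
    by (intro sum.cong) (simp_all add: eg_field_eq power2_eq_square algebra_simps)
  then show ?thesis
    by (simp add: sum_subtractf sum_distrib_left)
qed

context
  fixes K j :: nat and r :: "nat \<Rightarrow> real"
  assumes j_mem: "j \<in> {1..K}" and r_j_less: "r j < r 1"
    and r_best: "\<And>a. a \<in> {1..K} \<Longrightarrow> r a \<le> r 1"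
    and r_range: "\<And>a. a \<in> {1..K} \<Longrightarrow> 0 \<le> r a \<and> r a \<le> 1"
begin

lemma adv_best_ge: "softmax K \<theta> j * (r 1 - r j) \<le> adv K r \<theta> 1"
proof -
  have "softmax K \<theta> j * (r 1 - r j) \<le> (\<Sum>b=1..K. softmax K \<theta> b * (r 1 - r b))"
  proof (rule member_le_sum[OF j_mem _ finite_atLeastAtMost])
    fix b assume "b \<in> {1..K} - {j}"
    then show "0 \<le> softmax K \<theta> b * (r 1 - r b)"
      using r_best[of b] by (simp add: softmax_nonneg)
  qed
  then show ?thesis
    using j_mem by (simp add: adv_eq_sum)
qed

lemma adv_le_one_minus_softmax: "adv K r \<theta> j \<le> 1 - softmax K \<theta> j"
proof -
  have "adv K r \<theta> j = (\<Sum>b\<in>{1..K}-{j}. softmax K \<theta> b * (r j - r b))"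
    using j_mem by (simp add: adv_eq_sum sum.remove)
  also have "\<dots> \<le> (\<Sum>b\<in>{1..K}-{j}. softmax K \<theta> b)"
  proof (intro sum_mono mult_left_le softmax_nonneg)
    fix b assume "b \<in> {1..K} - {j}"
    then show "r j - r b \<le> 1"
      using r_range[of b] r_range[OF j_mem] by simp
  qed
  also have "\<dots> = 1 - softmax K \<theta> j"
    using j_mem sum_softmax_eq_1[of K \<theta>] by (simp add: sum_diff1)
  finally show ?thesis .
qed

lemma eg_gain_le_one_minus_softmax: "eg_gain K r \<theta> j \<le> 1 - softmax K \<theta> j"
proof -
  have "eg_gain K r \<theta> j \<le> max 0 (adv K r \<theta> j)"
    unfolding eg_gain_def by (simp add: mult_left_le_one_le softmax_nonneg softmax_le_1[OF j_mem])
  also have "\<dots> \<le> 1 - softmax K \<theta> j"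
    using adv_le_one_minus_softmax softmax_le_1[OF j_mem] by simp
  finally show ?thesis .
qed

lemma eg_gain_best_ge: "softmax K \<theta> 1 * (softmax K \<theta> j * (r 1 - r j)) \<le> eg_gain K r \<theta> 1"
  unfolding eg_gain_def
  by (intro mult_left_mono order_trans[OF adv_best_ge] max.cobounded2 softmax_nonneg)

lemma sum_eg_gain_ge: "eg_gain K r \<theta> 1 + eg_gain K r \<theta> j \<le> (\<Sum>a=1..K. eg_gain K r \<theta> a)"
proof -
  have "(\<Sum>a\<in>{1, j}. eg_gain K r \<theta> a) \<le> (\<Sum>a=1..K. eg_gain K r \<theta> a)"
    using j_mem by (intro sum_mono2) (auto simp: eg_gain_nonneg)
  moreover have "j \<noteq> 1"
    using r_j_less by auto
  ultimately show ?thesis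
    by simp
qed

context
  fixes \<theta> :: "nat \<Rightarrow> real"
  assumes eps_pos: "0 < 1 - softmax K \<theta> j"
    and eps_le_quarter: "1 - softmax K \<theta> j \<le> 1 / 4"
    and eps_le_gap: "1 - softmax K \<theta> j \<le> (r 1 - r j) / (8 * real K)"
    and best_mass: "(1 - softmax K \<theta> j) / real K \<le> softmax K \<theta> 1"
begin

lemma eg_gain_best_ge_sector:
  "3 / 4 * (1 - softmax K \<theta> j) * ((r 1 - r j) / real K) \<le> eg_gain K r \<theta> 1"
proof -
  have "3 / 4 * (1 - softmax K \<theta> j) * ((r 1 - r j) / real K)
      = (1 - softmax K \<theta> j) / real K * (3 / 4 * (r 1 - r j))"
    by (simp add: field_simps)
  also have "\<dots> \<le> softmax K \<theta> 1 * (softmax K \<theta> j * (r 1 - r j))"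
    using best_mass eps_pos eps_le_quarter r_j_less
    by (intro mult_mono) (auto intro: mult_nonneg_nonneg softmax_nonneg)
  also have "\<dots> \<le> eg_gain K r \<theta> 1"
    by (rule eg_gain_best_ge)
  finally show ?thesis .
qed

lemma eg_field_diff_ge:
  "(r 1 - r j) / (4 * real K) * (1 - softmax K \<theta> j) \<le> eg_field K r \<theta> 1 - eg_field K r \<theta> j"
proof -
  define \<epsilon> where "\<epsilon> = 1 - softmax K \<theta> j"
  define L where "L = (r 1 - r j) / real K"
  define x y G where "x = eg_gain K r \<theta> 1" and "y = eg_gain K r \<theta> j"
    and "G = (\<Sum>a=1..K. eg_gain K r \<theta> a)"
  define p\<^sub>1 where "p\<^sub>1 = softmax K \<theta> 1"
  have p1_le: "p\<^sub>1 \<le> \<epsilon>"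
    unfolding p\<^sub>1_def \<epsilon>_def using j_mem r_j_less by (intro softmax_le_one_minus) auto
  have "eg_field K r \<theta> 1 - eg_field K r \<theta> j = x - y + (1 - \<epsilon> - p\<^sub>1) * G"
    using j_mem by (simp add: eg_field_eq x_def y_def G_def \<epsilon>_def p\<^sub>1_def algebra_simps)
  also have "\<dots> \<ge> x - y + (1 - \<epsilon> - p\<^sub>1) * (x + y)"
    using sum_eg_gain_ge p1_le eps_le_quarter
    by (intro add_left_mono mult_left_mono) (auto simp: x_def y_def G_def \<epsilon>_def)
  finally have "eg_field K r \<theta> 1 - eg_field K r \<theta> j \<ge> x * (2 - \<epsilon> - p\<^sub>1) - y * (\<epsilon> + p\<^sub>1)"
    by (simp add: algebra_simps)
  moreover have "x * (2 - \<epsilon> - p\<^sub>1) \<ge> x * (3 / 2)"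
    using p1_le eps_le_quarter eg_gain_nonneg
    by (intro mult_left_mono) (auto simp: x_def \<epsilon>_def)
  moreover have "y * (\<epsilon> + p\<^sub>1) \<le> \<epsilon> * (2 * \<epsilon>)"
    using eg_gain_le_one_minus_softmax eg_gain_nonneg p1_le softmax_nonneg[of K \<theta> 1]
    by (intro mult_mono) (auto simp: y_def \<epsilon>_def p\<^sub>1_def)
  moreover have "x \<ge> 3 / 4 * \<epsilon> * L"
    using eg_gain_best_ge_sector by (simp add: x_def \<epsilon>_def L_def)
  moreover have "\<epsilon> * (2 * \<epsilon>) \<le> \<epsilon> * (L / 4)"
    using eps_pos eps_le_gap by (intro mult_left_mono) (auto simp: \<epsilon>_def L_def)
  moreover have "0 \<le> \<epsilon> * L"
    using eps_pos r_j_less by (simp add: \<epsilon>_def L_def)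
  moreover have "(r 1 - r j) / (4 * real K) * (1 - softmax K \<theta> j) = \<epsilon> * L / 4"
    by (simp add: \<epsilon>_def L_def field_simps)
  ultimately show ?thesis
    by linarith
qed

lemma eg_field_lt_mean:
  "eg_field K r \<theta> j < (\<Sum>a=1..K. softmax K \<theta> a * eg_field K r \<theta> a)"
proof -
  define \<epsilon> where "\<epsilon> = 1 - softmax K \<theta> j"
  define L where "L = (r 1 - r j) / real K"
  define x y G where "x = eg_gain K r \<theta> 1" and "y = eg_gain K r \<theta> j"
    and "G = (\<Sum>a=1..K. eg_gain K r \<theta> a)"
  define S Q where "S = (\<Sum>a=1..K. softmax K \<theta> a * eg_gain K r \<theta> a)"
    and "Q = (\<Sum>a=1..K. softmax K \<theta> a ^ 2)"
  have x_ge: "3 / 4 * \<epsilon> * L \<le> x"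
    using eg_gain_best_ge_sector by (simp add: x_def \<epsilon>_def L_def)
  have y_bounds: "0 \<le> y" "y \<le> \<epsilon>"
    using eg_gain_nonneg eg_gain_le_one_minus_softmax by (auto simp: y_def \<epsilon>_def)
  have \<epsilon>L_pos: "0 < \<epsilon> * L"
    using eps_pos r_j_less j_mem by (simp add: \<epsilon>_def L_def)
  have "softmax K \<theta> j * y \<le> S"
    unfolding S_def y_def
    by (rule member_le_sum[OF j_mem _ finite_atLeastAtMost]) (simp add: softmax_nonneg eg_gain_nonneg)
  moreover have "\<epsilon> * (1 - 2 * \<epsilon>) \<le> (1 - \<epsilon>) - Q"
    using sum_softmax_sq_le[OF j_mem, of \<theta>] by (simp add: Q_def \<epsilon>_def power2_eq_square algebra_simps)
  then have "(x + y) * (\<epsilon> * (1 - 2 * \<epsilon>)) \<le> G * ((1 - \<epsilon>) - Q)"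
    using sum_eg_gain_ge eg_gain_nonneg eps_pos eps_le_quarter
    by (intro mult_mono) (auto simp: x_def y_def G_def \<epsilon>_def intro: sum_nonneg)
  moreover have "eg_field K r \<theta> j - (\<Sum>a=1..K. softmax K \<theta> a * eg_field K r \<theta> a)
      = (y - S) - G * ((1 - \<epsilon>) - Q)"
    unfolding sum_softmax_eg_field eg_field_eq[OF j_mem]
    by (simp add: y_def S_def G_def Q_def \<epsilon>_def algebra_simps)
  ultimately have drift_le: "eg_field K r \<theta> j - (\<Sum>a=1..K. softmax K \<theta> a * eg_field K r \<theta> a)
      \<le> - (\<epsilon> * ((1 - 2 * \<epsilon>) * x - 2 * \<epsilon> * y))"
    unfolding \<epsilon>_def by (simp add: algebra_simps)
  have "1 / 2 * x \<le> (1 - 2 * \<epsilon>) * x"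
    using eps_le_quarter eg_gain_nonneg by (intro mult_right_mono) (auto simp: \<epsilon>_def x_def)
  moreover have "2 * \<epsilon> * y \<le> 2 * \<epsilon> * (L / 8)"
    using y_bounds eps_pos eps_le_gap by (intro mult_left_mono) (auto simp: \<epsilon>_def L_def)
  ultimately have "0 < (1 - 2 * \<epsilon>) * x - 2 * \<epsilon> * y"
    using x_ge \<epsilon>L_pos by linarith
  then have "0 < \<epsilon> * ((1 - 2 * \<epsilon>) * x - 2 * \<epsilon> * y)"
    using eps_pos by (simp add: \<epsilon>_def)
  then show ?thesis
    using drift_le by linarith
qed

end

lemma eg_flow_sector_rates:
  fixes \<theta> :: "real \<Rightarrow> nat \<Rightarrow> real"
  assumes \<theta>': "\<And>a. a \<in> {1..K} \<Longrightarrow> ((\<lambda>s. \<theta> s a) has_real_derivative eg_field K r (\<theta> t) a) (at t)"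
    and sector: "0 < 1 - softmax K (\<theta> t) j" "1 - softmax K (\<theta> t) j \<le> 1 / 4"
      "1 - softmax K (\<theta> t) j \<le> (r 1 - r j) / (8 * real K)"
      "(1 - softmax K (\<theta> t) j) / real K \<le> softmax K (\<theta> t) 1"
  shows "\<exists>D. ((\<lambda>s. ln (softmax K (\<theta> s) 1 / softmax K (\<theta> s) j)) has_real_derivative D) (at t)
           \<and> (r 1 - r j) / (4 * real K) * (1 - softmax K (\<theta> t) j) \<le> D"
    and "\<exists>E. ((\<lambda>s. 1 - softmax K (\<theta> s) j) has_real_derivative E) (at t) \<and> 0 < E"
proof -
  have "1 \<in> {1..K}"
    using j_mem by simp
  then show "\<exists>D. ((\<lambda>s. ln (softmax K (\<theta> s) 1 / softmax K (\<theta> s) j)) has_real_derivative D) (at t)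
           \<and> (r 1 - r j) / (4 * real K) * (1 - softmax K (\<theta> t) j) \<le> D"
    using ln_softmax_ratio_has_real_derivative[where v = "eg_field K r (\<theta> t)", OF _ j_mem \<theta>']
      eg_field_diff_ge[OF sector] by blast
  have "((\<lambda>s. 1 - softmax K (\<theta> s) j) has_real_derivative
      softmax K (\<theta> t) j * ((\<Sum>a=1..K. softmax K (\<theta> t) a * eg_field K r (\<theta> t) a)
        - eg_field K r (\<theta> t) j)) (at t)"
    using DERIV_diff[OF DERIV_const softmax_has_real_derivative[where v = "eg_field K r (\<theta> t)", OF j_mem \<theta>']]
    by (simp add: algebra_simps)
  moreover have "0 < softmax K (\<theta> t) j * ((\<Sum>a=1..K. softmax K (\<theta> t) a * eg_field K r (\<theta> t) a)
      - eg_field K r (\<theta> t) j)"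
    using eg_field_lt_mean[OF sector] softmax_pos[of K] j_mem by simp
  ultimately show "\<exists>E. ((\<lambda>s. 1 - softmax K (\<theta> s) j) has_real_derivative E) (at t) \<and> 0 < E"
    by blast
qed

end

theorem lemma3:
  fixes K j :: nat and r :: "nat \<Rightarrow> real"
  assumes K2: "K \<ge> 2"
    and r_range: "\<forall>a\<in>{1..K}. 0 \<le> r a \<and> r a \<le> 1"
    and r_strict: "\<forall>a b. 1 \<le> a \<longrightarrow> a < b \<longrightarrow> b \<le> K \<longrightarrow> r b < r a"
    and j_range: "j \<in> {2..K}"
  shows "\<exists>\<epsilon>bar > 0. \<forall>(\<theta> :: real \<Rightarrow> nat \<Rightarrow> real) T.
     open T \<longrightarrow>
     (\<forall>t\<in>T. \<forall>a\<in>{1..K}. ((\<lambda>s. \<theta> s a) has_real_derivative eg_field K r (\<theta> t) a) (at t)) \<longrightarrow>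
     (\<forall>t\<in>T.
        (let \<epsilon> = 1 - softmax K (\<theta> t) j in
          0 < \<epsilon> \<and> \<epsilon> < \<epsilon>bar \<and> softmax K (\<theta> t) 1 \<ge> \<epsilon> / real K) \<longrightarrow>
        (\<exists>D. ((\<lambda>s. ln (softmax K (\<theta> s) 1 / softmax K (\<theta> s) j)) has_real_derivative D) (at t)
             \<and> D \<ge> (r 1 - r j) / (4 * real K) * (1 - softmax K (\<theta> t) j)) \<and>
        (\<exists>E. ((\<lambda>s. 1 - softmax K (\<theta> s) j) has_real_derivative E) (at t) \<and> E > 0))"
proof -
  have j_mem: "j \<in> {1..K}" and r_j_less: "r j < r 1"
    using j_range r_strict by auto
  have r_best: "r a \<le> r 1" if "a \<in> {1..K}" for a
    using that r_strict by (cases "a = 1") (auto intro: less_imp_le)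
  define \<epsilon>bar where "\<epsilon>bar = min (1 / 4) ((r 1 - r j) / (8 * real K))"
  have "0 < \<epsilon>bar"
    using r_j_less K2 by (simp add: \<epsilon>bar_def)
  moreover have "(\<exists>D. ((\<lambda>s. ln (softmax K (\<theta> s) 1 / softmax K (\<theta> s) j)) has_real_derivative D) (at t)
             \<and> D \<ge> (r 1 - r j) / (4 * real K) * (1 - softmax K (\<theta> t) j)) \<and>
        (\<exists>E. ((\<lambda>s. 1 - softmax K (\<theta> s) j) has_real_derivative E) (at t) \<and> E > 0)"
    if "\<forall>t\<in>T. \<forall>a\<in>{1..K}. ((\<lambda>s. \<theta> s a) has_real_derivative eg_field K r (\<theta> t) a) (at t)"
      and "t \<in> T" and "let \<epsilon> = 1 - softmax K (\<theta> t) j in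
          0 < \<epsilon> \<and> \<epsilon> < \<epsilon>bar \<and> softmax K (\<theta> t) 1 \<ge> \<epsilon> / real K"
    for \<theta> :: "real \<Rightarrow> nat \<Rightarrow> real" and T t
    using eg_flow_sector_rates[OF j_mem r_j_less r_best, where \<theta> = \<theta> and t = t] r_range that
    by (simp add: Let_def \<epsilon>bar_def)
  ultimately show ?thesis
    by blast
qed

end
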